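(* Let $d\ge2$ and $\overrightarrow{w}\in(0,\infty)^d$. There exists a $\overrightarrow{w}$-CM random vector $\overrightarrow{U}=(U_1,\dots,U_d)$ with uniform$[0,1]$ marginals (equivalently, a $\overrightarrow{w}$-CM $d$-dimensional copula) if and only if $$\max\{w_1,\dots,w_d\}\le\sum_{i=1}^dw_i-\max\{w_1,\dots,w_d\}.$$
   Context: A random vector $\overrightarrow{U}=(U_1,\dots,U_d)$ with each $U_i$ uniform on $[0,1]$ is $\overrightarrow{w}$-CM if $P\left(\sum_{i=1}^d w_iU_i=\frac12\sum_{i=1}^d w_i\right)=1$; its distribution function (a copula) is then called $\overrightarrow{w}$-CM. *)

theory Defs
  imports "HOL-Probability.Probability"
begin

text \<open>A probability law on (nat => real), living on the product space indexed by
  {..<d}, is the joint law of a random vector (U_0,...,U_(d-1)).\<close>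

definition w_CM_law :: "nat \<Rightarrow> (nat \<Rightarrow> real) \<Rightarrow> (nat \<Rightarrow> real) measure \<Rightarrow> bool" where
  "w_CM_law d w M \<longleftrightarrow>
     prob_space M \<and>
     sets M = sets (PiM {..<d} (\<lambda>_. borel)) \<and>
     (\<forall>i<d. distr M borel (\<lambda>x. x i) = uniform_measure lborel {0..1}) \<and>
     (AE x in M. (\<Sum>i<d. w i * x i) = (\<Sum>i<d. w i) / 2)"

end

theory Submission
  imports Defs
begin

text \<open>If \<open>\<Sum> w\<^sub>i (U\<^sub>i - 1/2) = 0\<close> almost surely, then
  \<open>|w\<^sub>m| |U\<^sub>m - 1/2| \<le> \<Sum>\<^bsub>i\<noteq>m\<^esub> |w\<^sub>i| |U\<^sub>i - 1/2|\<close>; taking expectations, which are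
  the same positive number for every uniform \<open>U\<^sub>i\<close>, gives the polygon inequality.

  Conversely, the polygon inequality says that the \<open>w\<^sub>i\<close> are the side lengths of a closed
  polygon in the plane, i.e.\ there are unit vectors \<open>v\<^sub>i\<close> with \<open>\<Sum> w\<^sub>i v\<^sub>i = 0\<close>. Let \<open>Q\<close> be
  the orthogonal projection to the plane of a uniformly distributed point on the sphere \<open>S\<^sup>2\<close>.
  By Archimedes' hat-box theorem and rotation invariance, \<open>\<langle>v, Q\<rangle>\<close> is uniform on \<open>[-1,1]\<close>
  for every unit vector \<open>v\<close>, so \<open>U\<^sub>i = (1 + \<langle>v\<^sub>i, Q\<rangle>) / 2\<close> is a \<open>w\<close>-CM vector.\<close>

lemma lborel_distr_swap:
  "distr lborel lborel prod.swap = (lborel :: (real \<times> real) measure)"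
proof -
  have "distr lborel lborel prod.swap = distr (lborel \<Otimes>\<^sub>M lborel) (lborel \<Otimes>\<^sub>M lborel) (\<lambda>(x::real, y::real). (y, x))"
    by (intro distr_cong) (simp_all add: lborel_prod borel_prod[symmetric] prod.swap_def split_beta)
  also have "\<dots> = lborel \<Otimes>\<^sub>M lborel"
    by (rule lborel_pair.distr_pair_swap[symmetric])
  finally show ?thesis by (simp only: lborel_prod)
qed

lemma lborel_distr_shear:
  fixes g :: "real \<Rightarrow> real"
  assumes [measurable]: "g \<in> borel_measurable borel"
  shows "distr lborel lborel (\<lambda>p. (fst p + g (snd p), snd p)) = lborel"
proof (rule measure_eqI)
  have [measurable]: "(\<lambda>p. (fst p + g (snd p), snd p)) \<in> borel_measurable borel"
    unfolding borel_prod[symmetric] by measurable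
  fix A assume "A \<in> sets (distr lborel lborel (\<lambda>p. (fst p + g (snd p), snd p)))"
  then have [measurable]: "A \<in> sets (borel :: (real \<times> real) measure)" by simp
  have "emeasure (distr lborel lborel (\<lambda>p. (fst p + g (snd p), snd p))) A
      = (\<integral>\<^sup>+p. indicator A (fst p + g (snd p), snd p) \<partial>(lborel \<Otimes>\<^sub>M lborel))"
    by (subst nn_integral_indicator[symmetric], simp, subst nn_integral_distr)
      (simp_all add: lborel_prod measurable_lborel1 measurable_lborel2)
  also have "\<dots> = (\<integral>\<^sup>+y. \<integral>\<^sup>+x. indicator A (x + g y, y) \<partial>lborel \<partial>lborel)"
    by (subst lborel_pair.nn_integral_snd[symmetric]) auto
  also have "\<dots> = (\<integral>\<^sup>+y. \<integral>\<^sup>+x. indicator A (x, y) \<partial>lborel \<partial>lborel)"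
  proof (rule nn_integral_cong)
    fix y
    show "(\<integral>\<^sup>+x. indicator A (x + g y, y) \<partial>lborel) = (\<integral>\<^sup>+x. indicator A (x, y) \<partial>lborel)"
      using nn_integral_real_affine[of "\<lambda>x. indicator A (x, y)" 1 "g y"] by (simp add: add.commute)
  qed
  also have "\<dots> = emeasure lborel A"
    by (subst lborel_pair.nn_integral_snd) (auto simp: lborel_prod)
  finally show "emeasure (distr lborel lborel (\<lambda>p. (fst p + g (snd p), snd p))) A = emeasure lborel A" .
qed simp

lemma distr_comp_eq_self:
  assumes "f \<in> measurable M M" "g \<in> measurable M M" "distr M M f = M" "distr M M g = M"
  shows "distr M M (f \<circ> g) = M"
  using assms by (simp add: distr_distr[symmetric])

lemma lborel_distr_shear_fst:
  "distr lborel lborel (\<lambda>p. (fst p + a * snd p, snd p)) = (lborel :: (real \<times> real) measure)"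
  using lborel_distr_shear[of "\<lambda>y. a * y"] by simp

lemma lborel_distr_shear_snd:
  "distr lborel lborel (\<lambda>p. (fst p, snd p + b * fst p)) = (lborel :: (real \<times> real) measure)"
proof -
  have "(\<lambda>p. (fst p, snd p + b * fst p)) = prod.swap \<circ> (\<lambda>p. (fst p + b * snd p, snd p)) \<circ> prod.swap"
    by auto
  then show ?thesis
    using lborel_distr_swap lborel_distr_shear_fst
    by (simp only:) (intro distr_comp_eq_self measurable_comp;
        auto simp: measurable_lborel1 measurable_lborel2 prod.swap_def
          intro!: borel_measurable_continuous_onI continuous_intros)
qed

definition rotation :: "real \<Rightarrow> real \<Rightarrow> real \<times> real \<Rightarrow> real \<times> real" where
  "rotation c s p = (c * fst p + s * snd p, - s * fst p + c * snd p)"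

lemma measurable_rotation[measurable]: "rotation c s \<in> borel_measurable borel"
  unfolding rotation_def by (intro borel_measurable_continuous_onI continuous_intros)

text \<open>Paeth's decomposition of a rotation by an angle \<open>\<theta>\<close> into three shears, with
  \<open>t = tan (\<theta>/2)\<close>.\<close>

lemma rotation_eq_shears:
  assumes "c\<^sup>2 + s\<^sup>2 = 1" "c \<noteq> -1"
  defines "t \<equiv> s / (1 + c)"
  shows "rotation c s = (\<lambda>p. (fst p + t * snd p, snd p)) \<circ> (\<lambda>p. (fst p, snd p + (- s) * fst p))
    \<circ> (\<lambda>p. (fst p + t * snd p, snd p))"
proof -
  have "1 + c \<noteq> 0" using assms(2) by auto
  then have ts: "t * s = 1 - c" and t: "t * (1 + c) = s"
    using assms(1) by (auto simp: t_def field_simps power2_eq_square)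
  have "2 * t - s * t\<^sup>2 = 2 * t - (t * s) * t"
    by (simp add: power2_eq_square)
  also have "\<dots> = t * (1 + c)"
    unfolding ts by (simp add: algebra_simps)
  finally have "2 * t - s * t\<^sup>2 = s"
    unfolding t .
  with ts show ?thesis
    unfolding rotation_def fun_eq_iff comp_def prod_eq_iff fst_conv snd_conv
    by (simp add: power2_eq_square) algebra
qed

lemma lborel_distr_rotation:
  assumes "c\<^sup>2 + s\<^sup>2 = 1"
  shows "distr lborel lborel (rotation c s) = lborel"
proof -
  have *: "distr lborel lborel (rotation c s) = lborel" if "c\<^sup>2 + s\<^sup>2 = 1" "c \<noteq> -1" for c s
    using that(2) unfolding rotation_eq_shears[OF that]
    by (intro distr_comp_eq_self measurable_comp lborel_distr_shear_fst lborel_distr_shear_snd;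
        auto simp: measurable_lborel1 measurable_lborel2 add_eq_0_iff
          intro!: borel_measurable_continuous_onI continuous_intros)
  show ?thesis
  proof (cases "c = -1")
    case True
    with assms have "rotation c s = rotation 0 1 \<circ> rotation 0 1"
      by (auto simp: rotation_def)
    then show ?thesis
      using *[of 0 1] by (auto intro!: distr_comp_eq_self simp: measurable_lborel1 measurable_lborel2)
  qed (use * assms in auto)
qed

lemma nn_integral_arcsin_derivative:
  "(\<integral>\<^sup>+z. ennreal (1 / sqrt (1 - z\<^sup>2)) * indicator {-1<..<1} z \<partial>lborel) = ennreal pi"
proof -
  let ?f = "\<lambda>z::real. 1 / sqrt (1 - z\<^sup>2)"
  have deriv: "DERIV arcsin x :> ?f x" if "ereal (-1) < ereal x" "ereal x < ereal 1" for x
    using that DERIV_arcsin[of x] by (simp add: divide_inverse)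
  have cont: "isCont ?f x" if "ereal (-1) < ereal x" "ereal x < ereal 1" for x
  proof -
    have "1 - x\<^sup>2 > 0" using that by (simp add: abs_less_iff abs_square_less_1)
    then show ?thesis by (intro continuous_intros) auto
  qed
  have nonneg: "AE x in lborel. ereal (-1) < ereal x \<longrightarrow> ereal x < ereal 1 \<longrightarrow> 0 \<le> ?f x"
    by (auto simp: abs_square_less_1 less_imp_le)
  have arcsin_cont: "continuous_on {-1..1} arcsin" by (rule continuous_on_arcsin')
  have lim_left: "((arcsin \<circ> real_of_ereal) \<longlongrightarrow> - (pi/2)) (at_right (ereal (-1)))"
    unfolding ereal_tendsto_simps1
    using arcsin_cont[unfolded continuous_on_def, rule_format, of "-1"]
    by (auto simp: at_within_Icc_at_right dest: tendsto_within_subset[where T="{-1<..}"])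
  have lim_right: "((arcsin \<circ> real_of_ereal) \<longlongrightarrow> pi/2) (at_left (ereal 1))"
    unfolding ereal_tendsto_simps1
    using arcsin_cont[unfolded continuous_on_def, rule_format, of "1"]
    by (auto simp: at_within_Icc_at_left)
  have "ereal (-1) < ereal 1" by simp
  note FTC = interval_integral_FTC_nonneg[OF this deriv cont nonneg lim_left lim_right]
  have "integral {-1<..<1} ?f = pi"
    using interval_integral_eq_integral'[of "ereal (-1)" "ereal 1" ?f] FTC by simp
  moreover have "?f integrable_on {-1<..<1}"
    using set_borel_integral_eq_integral(1)[OF FTC(1)] by simp
  ultimately have "(?f has_integral pi) {-1<..<1}"
    by (simp add: has_integral_iff)
  then show ?thesis
    by (subst nn_integral_has_integral_lebesgue') (auto simp: abs_square_less_1 less_imp_le)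
qed

text \<open>The density on the unit disc of the orthogonal projection onto a plane of the
  uniform distribution on the unit sphere \<open>S\<^sup>2\<close>.\<close>

definition shadow_density :: "real \<times> real \<Rightarrow> real" where
  "shadow_density q =
    (if (fst q)\<^sup>2 + (snd q)\<^sup>2 < 1 then 1 / (2 * pi * sqrt (1 - (fst q)\<^sup>2 - (snd q)\<^sup>2)) else 0)"

lemma borel_measurable_shadow_density[measurable]: "shadow_density \<in> borel_measurable borel"
  unfolding shadow_density_def borel_prod[symmetric] by measurable

lemma shadow_density_rotation:
  assumes "c\<^sup>2 + s\<^sup>2 = 1"
  shows "shadow_density (rotation c s q) = shadow_density q"
proof -
  have "(c * fst q + s * snd q)\<^sup>2 + (- s * fst q + c * snd q)\<^sup>2 = (c\<^sup>2 + s\<^sup>2) * ((fst q)\<^sup>2 + (snd q)\<^sup>2)"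
    by (simp add: power2_eq_square algebra_simps)
  then show ?thesis using assms by (simp add: shadow_density_def rotation_def)
qed

lemma shadow_density_rescaled:
  assumes "x\<^sup>2 < 1"
  defines "r \<equiv> sqrt (1 - x\<^sup>2)"
  shows "ennreal (shadow_density (x, r * z))
    = ennreal (1 / (2 * pi * r)) * (ennreal (1 / sqrt (1 - z\<^sup>2)) * indicator {-1<..<1} z)"
proof -
  have r: "r > 0" "r\<^sup>2 = 1 - x\<^sup>2" using assms by (auto simp: r_def)
  have rz: "(r * z)\<^sup>2 = (1 - x\<^sup>2) * z\<^sup>2"
    using r by (simp add: power_mult_distrib)
  show ?thesis
  proof (cases "z\<^sup>2 < 1")
    case True
    then have "z \<in> {-1<..<1}" by (simp add: abs_square_less_1 abs_less_iff)
    have "(1 - x\<^sup>2) * z\<^sup>2 < (1 - x\<^sup>2) * 1"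
      using True assms(1) by (intro mult_strict_left_mono) simp_all
    then have "x\<^sup>2 + (r * z)\<^sup>2 < 1"
      unfolding rz by simp
    moreover have "1 - x\<^sup>2 - (r * z)\<^sup>2 = r\<^sup>2 * (1 - z\<^sup>2)"
      using r by (simp add: power_mult_distrib algebra_simps)
    then have "sqrt (1 - x\<^sup>2 - (r * z)\<^sup>2) = r * sqrt (1 - z\<^sup>2)"
      using r(1) by (simp only: real_sqrt_mult real_sqrt_abs abs_of_pos)
    ultimately have "shadow_density (x, r * z) = 1 / (2 * pi * r) * (1 / sqrt (1 - z\<^sup>2))"
      by (simp add: shadow_density_def)
    then show ?thesis using \<open>z \<in> {-1<..<1}\<close> r True
      by (simp add: ennreal_mult'[symmetric] del: ennreal_mult' ennreal_mult'')
  next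
    case False
    then have "z \<notin> {-1<..<1}" by (auto simp: abs_square_less_1 abs_less_iff)
    have "(1 - x\<^sup>2) * 1 \<le> (1 - x\<^sup>2) * z\<^sup>2"
      using False assms(1) by (intro mult_left_mono) simp_all
    then have "\<not> x\<^sup>2 + (r * z)\<^sup>2 < 1"
      unfolding rz by simp
    then show ?thesis using \<open>z \<notin> {-1<..<1}\<close> by (simp add: shadow_density_def)
  qed
qed

text \<open>Archimedes' hat-box theorem: the first coordinate of the shadow is uniform on \<open>[-1,1]\<close>.\<close>

lemma nn_integral_shadow_density_snd:
  "(\<integral>\<^sup>+y. shadow_density (x, y) \<partial>lborel) = ennreal (1/2) * indicator {-1<..<1} x"
proof (cases "\<bar>x\<bar> < 1")
  case False
  then have "shadow_density (x, y) = 0" for y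
    using abs_square_less_1[of x] by (auto simp: shadow_density_def not_less
        intro: order.trans[OF _ add_increasing2[OF zero_le_power2 order.refl]])
  then show ?thesis using False by (auto simp: indicator_def)
next
  case True
  define r where "r = sqrt (1 - x\<^sup>2)"
  have x2: "x\<^sup>2 < 1" using True by (simp add: abs_square_less_1)
  then have r: "r > 0" by (simp add: r_def)
  have "(\<integral>\<^sup>+y. shadow_density (x, y) \<partial>lborel)
      = ennreal \<bar>r\<bar> * (\<integral>\<^sup>+z. ennreal (shadow_density (x, 0 + r * z)) \<partial>lborel)"
    by (rule nn_integral_real_affine) (use r in auto)
  also have "\<dots> = ennreal r * (ennreal (1 / (2 * pi * r)) * ennreal pi)"
    using r shadow_density_rescaled[OF x2]
    by (simp add: r_def nn_integral_cmult nn_integral_arcsin_derivative)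
  finally show ?thesis using True r
    by (simp add: indicator_def abs_less_iff ennreal_mult'[symmetric] del: ennreal_mult' ennreal_mult'')
qed

definition shadow_law :: "(real \<times> real) measure" where
  "shadow_law = density lborel (\<lambda>q. ennreal (shadow_density q))"

lemma sets_shadow_law[simp, measurable_cong]: "sets shadow_law = sets borel"
  by (simp add: shadow_law_def)

lemma measurable_shadow_lawI: "f \<in> measurable borel N \<Longrightarrow> f \<in> measurable shadow_law N"
  by (simp add: measurable_cong_sets[OF sets_shadow_law refl])

lemma distr_shadow_law_fst:
  "distr shadow_law borel (\<lambda>q. (1 + fst q) / 2) = uniform_measure lborel {0..1}"
proof (rule measure_eqI)
  fix A assume "A \<in> sets (distr shadow_law borel (\<lambda>q. (1 + fst q) / 2))"
  then have [measurable]: "A \<in> sets borel" by simp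
  have [measurable]: "(\<lambda>q::real \<times> real. (1 + fst q) / 2) \<in> borel_measurable borel"
    by (intro borel_measurable_continuous_onI continuous_intros) auto
  have "emeasure (distr shadow_law borel (\<lambda>q. (1 + fst q) / 2)) A
      = (\<integral>\<^sup>+q. ennreal (shadow_density q) * indicator A ((1 + fst q) / 2) \<partial>(lborel \<Otimes>\<^sub>M lborel))"
    by (subst nn_integral_indicator[symmetric], simp, subst nn_integral_distr)
      (auto intro: measurable_shadow_lawI simp: shadow_law_def nn_integral_density lborel_prod)
  also have "\<dots> = (\<integral>\<^sup>+x. (\<integral>\<^sup>+y. shadow_density (x, y) \<partial>lborel) * indicator A ((1 + x) / 2) \<partial>lborel)"
    by (subst lborel.nn_integral_fst[symmetric]) (auto simp: lborel_prod nn_integral_multc)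
  also have "\<dots> = (\<integral>\<^sup>+x. ennreal (1/2) * indicator ({0..1} \<inter> A) (1/2 + (1/2) * x) \<partial>lborel)"
  proof (rule nn_integral_cong_AE)
    have "AE x in lborel. x \<noteq> -1" "AE x in lborel. x \<noteq> 1" by (rule AE_lborel_singleton)+
    then show "AE x in lborel. (\<integral>\<^sup>+y. shadow_density (x, y) \<partial>lborel) * indicator A ((1 + x) / 2)
        = ennreal (1/2) * indicator ({0..1} \<inter> A) (1/2 + (1/2) * x)"
      by eventually_elim (auto simp: nn_integral_shadow_density_snd indicator_def add_divide_distrib)
  qed
  also have "\<dots> = ennreal \<bar>1/2\<bar> * (\<integral>\<^sup>+x. indicator ({0..1} \<inter> A) (1/2 + (1/2) * x) \<partial>lborel)"
    by (subst nn_integral_cmult) auto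
  also have "\<dots> = emeasure lborel ({0..1} \<inter> A)"
    by (subst nn_integral_real_affine[symmetric]) auto
  also have "\<dots> = emeasure (uniform_measure lborel {0..1}) A"
    by (simp add: divide_ennreal_def)
  finally show "emeasure (distr shadow_law borel (\<lambda>q. (1 + fst q) / 2)) A
      = emeasure (uniform_measure lborel {0..1}) A" .
qed simp

lemma prob_space_shadow_law: "prob_space shadow_law"
proof
  have "emeasure shadow_law (space shadow_law) = emeasure (distr shadow_law borel (\<lambda>q. (1 + fst q) / 2)) UNIV"
    by (subst emeasure_distr)
      (auto intro!: measurable_shadow_lawI borel_measurable_continuous_onI continuous_intros)
  then show "emeasure shadow_law (space shadow_law) = 1"
    by (simp add: distr_shadow_law_fst)
qed

lemma distr_shadow_law_rotation:
  assumes "c\<^sup>2 + s\<^sup>2 = 1"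
  shows "distr shadow_law lborel (rotation c s) = shadow_law"
proof -
  have "shadow_law = density (distr lborel lborel (rotation c s)) (\<lambda>q. ennreal (shadow_density q))"
    unfolding shadow_law_def lborel_distr_rotation[OF assms] ..
  also have "\<dots> = distr (density lborel (\<lambda>q. ennreal (shadow_density (rotation c s q)))) lborel (rotation c s)"
    by (subst density_distr) (auto simp: measurable_lborel1 measurable_lborel2)
  finally show ?thesis
    unfolding shadow_law_def shadow_density_rotation[OF assms] by simp
qed

lemma distr_shadow_law_projection:
  assumes "c\<^sup>2 + s\<^sup>2 = 1"
  shows "distr shadow_law borel (\<lambda>q. (1 + c * fst q + s * snd q) / 2) = uniform_measure lborel {0..1}"
proof -
  have "distr shadow_law borel (\<lambda>q. (1 + c * fst q + s * snd q) / 2)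
      = distr (distr shadow_law lborel (rotation c s)) borel (\<lambda>q. (1 + fst q) / 2)"
    by (subst distr_distr)
      (auto simp: comp_def rotation_def add.assoc measurable_lborel2
        intro!: measurable_shadow_lawI borel_measurable_continuous_onI continuous_intros)
  then show ?thesis
    unfolding distr_shadow_law_rotation[OF assms] distr_shadow_law_fst .
qed

lemma w_CM_law_shadow:
  fixes z :: "nat \<Rightarrow> complex"
  assumes unit: "\<And>i. i < d \<Longrightarrow> cmod (z i) = 1" and balanced: "(\<Sum>i<d. w i *\<^sub>R z i) = 0"
  defines "U \<equiv> \<lambda>q. \<lambda>i\<in>{..<d}. (1 + Re (z i) * fst q + Im (z i) * snd q) / 2"
  shows "w_CM_law d w (distr shadow_law (PiM {..<d} (\<lambda>_. borel)) U)"
proof -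
  have [measurable]: "(\<lambda>q. (1 + Re (z i) * fst q + Im (z i) * snd q) / 2) \<in> measurable shadow_law borel" for i
    by (intro measurable_shadow_lawI borel_measurable_continuous_onI continuous_intros) auto
  have U[measurable]: "U \<in> measurable shadow_law (PiM {..<d} (\<lambda>_. borel))"
    unfolding U_def by measurable
  interpret prob_space shadow_law by (rule prob_space_shadow_law)
  have marginal: "distr (distr shadow_law (PiM {..<d} (\<lambda>_. borel)) U) borel (\<lambda>x. x i)
      = uniform_measure lborel {0..1}" if "i < d" for i
  proof -
    have "(Re (z i))\<^sup>2 + (Im (z i))\<^sup>2 = 1"
      using unit[OF that] by (simp flip: cmod_power2)
    moreover have "(\<lambda>x. x i) \<circ> U = (\<lambda>q. (1 + Re (z i) * fst q + Im (z i) * snd q) / 2)"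
      using that by (auto simp: U_def)
    ultimately show ?thesis
      using that by (subst distr_distr) (auto simp: distr_shadow_law_projection)
  qed
  have "(\<Sum>i<d. w i * U q i) = (\<Sum>i<d. w i) / 2" for q
  proof -
    have "(\<Sum>i<d. w i * U q i)
        = (\<Sum>i<d. w i) / 2 + (fst q * Re (\<Sum>i<d. w i *\<^sub>R z i) + snd q * Im (\<Sum>i<d. w i *\<^sub>R z i)) / 2"
      by (simp add: U_def sum_divide_distrib[symmetric] sum_distrib_left sum.distrib
          add_divide_distrib algebra_simps)
    then show ?thesis using balanced by simp
  qed
  then have "AE x in distr shadow_law (PiM {..<d} (\<lambda>_. borel)) U. (\<Sum>i<d. w i * x i) = (\<Sum>i<d. w i) / 2"
    by (subst AE_distr_iff) auto
  with marginal show ?thesis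
    unfolding w_CM_law_def by (auto intro: prob_space_distr)
qed

lemma exists_balanced_bipartition:
  fixes w :: "'a \<Rightarrow> real"
  assumes "finite J" "\<And>i. i \<in> J \<Longrightarrow> 0 \<le> w i \<and> w i \<le> K" "0 \<le> K"
  shows "\<exists>A \<subseteq> J. \<bar>sum w A - sum w (J - A)\<bar> \<le> K"
  using assms
proof (induction J rule: finite_induct)
  case (insert j J)
  then obtain A where A: "A \<subseteq> J" "\<bar>sum w A - sum w (J - A)\<bar> \<le> K" by auto
  have wj: "0 \<le> w j" "w j \<le> K" using insert.prems by auto
  have "finite A" "j \<notin> A" using A(1) insert.hyps finite_subset by blast+
  show ?case
  proof (cases "sum w A \<ge> sum w (J - A)")
    case True
    have "insert j J - A = insert j (J - A)" using \<open>j \<notin> A\<close> by auto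
    then have "\<bar>sum w A - sum w (insert j J - A)\<bar> \<le> K"
      using True A(2) wj insert.hyps by simp
    then show ?thesis using A(1) by blast
  next
    case False
    have "insert j J - insert j A = J - A" using A(1) insert.hyps by auto
    then have "\<bar>sum w (insert j A) - sum w (insert j J - insert j A)\<bar> \<le> K"
      using False A(2) wj \<open>finite A\<close> \<open>j \<notin> A\<close> by simp
    then show ?thesis using A(1) by (intro exI[of _ "insert j A"]) auto
  qed
qed simp

lemma exists_triangle_apex:
  fixes M a b :: real
  assumes "0 < M" "0 \<le> a" "0 \<le> b" "\<bar>a - b\<bar> \<le> M" "M \<le> a + b"
  shows "\<exists>u::complex. cmod u = a \<and> cmod (of_real M - u) = b"
proof -
  define x where "x = (M\<^sup>2 + a\<^sup>2 - b\<^sup>2) / (2 * M)"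
  have "(M - a)\<^sup>2 \<le> b\<^sup>2" "b\<^sup>2 \<le> (M + a)\<^sup>2"
    using assms by (auto simp flip: abs_le_square_iff intro: power_mono)
  then have "\<bar>x\<bar> \<le> a"
    using assms(1) by (auto simp: x_def abs_le_iff field_simps power2_diff power2_sum)
  then have xa: "x\<^sup>2 \<le> a\<^sup>2"
    by (metis abs_le_square_iff abs_of_nonneg assms(2))
  define u where "u = Complex x (sqrt (a\<^sup>2 - x\<^sup>2))"
  have "(cmod u)\<^sup>2 = a\<^sup>2"
    using xa by (simp add: u_def cmod_power2)
  moreover have "2 * M * x = M\<^sup>2 + a\<^sup>2 - b\<^sup>2"
    using assms(1) by (simp add: x_def)
  then have "(cmod (of_real M - u))\<^sup>2 = b\<^sup>2"
    using xa by (simp add: u_def cmod_power2 power2_diff)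
  ultimately show ?thesis
    using assms(2,3) by (metis norm_ge_zero power2_eq_iff_nonneg)
qed

lemma norm_scaleR_sgn: "norm x *\<^sub>R sgn x = x"
  for x :: "'a::real_normed_vector"
  by (cases "x = 0") (simp_all add: sgn_div_norm)

text \<open>All sides in \<open>A\<close> point one way and all sides in \<open>B\<close> another, so the polygon is
  really a triangle with side lengths \<open>w m\<close>, \<open>\<Sum>A\<close> and \<open>\<Sum>B\<close>.\<close>

lemma exists_balanced_unit_vectors_triangle:
  fixes w :: "'a \<Rightarrow> real"
  assumes "finite A" "finite B" "A \<inter> B = {}" "m \<notin> A \<union> B"
    and pos: "\<And>i. i \<in> insert m (A \<union> B) \<Longrightarrow> 0 < w i"
    and "\<bar>sum w A - sum w B\<bar> \<le> w m" "w m \<le> sum w A + sum w B"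
  shows "\<exists>z. (\<forall>i\<in>insert m (A \<union> B). cmod (z i) = 1) \<and> (\<Sum>i\<in>insert m (A \<union> B). w i *\<^sub>R z i) = 0"
proof -
  have sum_pos: "0 < sum w C" if "i \<in> C" "C \<in> {A, B}" for i C
    using that assms(1,2) pos by (intro sum_pos2[of C i]) (auto intro: less_imp_le)
  have "0 \<le> sum w A" "0 \<le> sum w B"
    using pos[THEN less_imp_le] by (simp_all add: sum_nonneg)
  then obtain u where u: "cmod u = sum w A" "cmod (of_real (w m) - u) = sum w B"
    using exists_triangle_apex[of "w m" "sum w A" "sum w B"] pos assms(6,7) by auto
  define z where "z i = (if i = m then -1 else if i \<in> A then sgn u else sgn (of_real (w m) - u))" for i
  have "cmod (z i) = 1" if i: "i \<in> insert m (A \<union> B)" for i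
  proof -
    consider "i = m" | "i \<noteq> m" "i \<in> A" | "i \<noteq> m" "i \<notin> A" "i \<in> B"
      using i by auto
    then show ?thesis
    proof cases
      case 2
      then have "u \<noteq> 0" using sum_pos[of i A] u(1) by auto
      then show ?thesis using 2 by (simp add: z_def norm_sgn)
    next
      case 3
      then have "of_real (w m) - u \<noteq> 0" using sum_pos[of i B] u(2) by auto
      then show ?thesis using 3 by (simp add: z_def norm_sgn)
    qed (simp add: z_def)
  qed
  moreover have "(\<Sum>i\<in>insert m (A \<union> B). w i *\<^sub>R z i) = 0"
  proof -
    have "(\<Sum>i\<in>A. w i *\<^sub>R z i) = sum w A *\<^sub>R sgn u"
      using assms(4) by (auto simp: scaleR_sum_left z_def intro!: sum.cong)
    moreover have "(\<Sum>i\<in>B. w i *\<^sub>R z i) = sum w B *\<^sub>R sgn (of_real (w m) - u)"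
      using assms(3,4) by (auto simp: scaleR_sum_left z_def intro!: sum.cong)
    ultimately show ?thesis
      using assms(1-4) unfolding u[symmetric] norm_scaleR_sgn
      by (simp add: sum.union_disjoint z_def scaleR_conv_of_real)
  qed
  ultimately show ?thesis by blast
qed

text \<open>The sides other than a longest one \<open>m\<close> are split into two groups whose total lengths
  differ by at most \<open>w m\<close>; together with the polygon inequality this gives a triangle.\<close>

lemma exists_balanced_unit_vectors:
  fixes w :: "'a \<Rightarrow> real"
  assumes "finite J" and pos: "\<And>i. i \<in> J \<Longrightarrow> 0 < w i"
    and polygon: "\<And>i. i \<in> J \<Longrightarrow> 2 * w i \<le> sum w J"
  shows "\<exists>z. (\<forall>i\<in>J. cmod (z i) = 1) \<and> (\<Sum>i\<in>J. w i *\<^sub>R z i) = 0"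
proof (cases "J = {}")
  case False
  have "Max (w ` J) \<in> w ` J"
    using \<open>finite J\<close> False by simp
  then obtain m where "m \<in> J" "w m = Max (w ` J)"
    by (metis imageE)
  then have m: "m \<in> J" "\<And>i. i \<in> J \<Longrightarrow> w i \<le> w m"
    using \<open>finite J\<close> by auto
  obtain A where A: "A \<subseteq> J - {m}" "\<bar>sum w A - sum w (J - {m} - A)\<bar> \<le> w m"
    using exists_balanced_bipartition[of "J - {m}" w "w m"] \<open>finite J\<close> pos[THEN less_imp_le] m
    by blast
  define B where "B = J - {m} - A"
  have J: "J = insert m (A \<union> B)" "m \<notin> A \<union> B" "A \<inter> B = {}" "finite A" "finite B"
    using A(1) m(1) \<open>finite J\<close> by (auto simp: B_def intro: finite_subset)
  moreover have "w m \<le> sum w A + sum w B"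
    using polygon[OF m(1)] J by (simp add: sum.union_disjoint)
  ultimately show ?thesis
    using exists_balanced_unit_vectors_triangle[of A B m w] pos A(2) by (simp add: B_def)
qed simp

lemma nn_integral_abs_le_of_AE_sum_eq_0:
  fixes X :: "'i \<Rightarrow> 'a \<Rightarrow> real"
  assumes "finite J" "m \<in> J" and [measurable]: "\<And>i. i \<in> J \<Longrightarrow> X i \<in> borel_measurable M"
    and "AE x in M. (\<Sum>i\<in>J. w i * X i x) = 0"
  shows "ennreal \<bar>w m\<bar> * (\<integral>\<^sup>+x. \<bar>X m x\<bar> \<partial>M)
    \<le> (\<Sum>i\<in>J - {m}. ennreal \<bar>w i\<bar> * (\<integral>\<^sup>+x. \<bar>X i x\<bar> \<partial>M))"
proof -
  have "AE x in M. ennreal (\<bar>w m\<bar> * \<bar>X m x\<bar>) \<le> (\<Sum>i\<in>J - {m}. ennreal (\<bar>w i\<bar> * \<bar>X i x\<bar>))"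
    using assms(4)
  proof eventually_elim
    case (elim x)
    then have "w m * X m x = - (\<Sum>i\<in>J - {m}. w i * X i x)"
      using assms(1,2) by (simp add: sum.remove eq_neg_iff_add_eq_0)
    then have "\<bar>w m\<bar> * \<bar>X m x\<bar> = \<bar>\<Sum>i\<in>J - {m}. w i * X i x\<bar>"
      by (simp add: abs_mult[symmetric])
    also have "\<dots> \<le> (\<Sum>i\<in>J - {m}. \<bar>w i\<bar> * \<bar>X i x\<bar>)"
      using sum_abs[of "\<lambda>i. w i * X i x" "J - {m}"] by (simp add: abs_mult)
    finally show ?case
      by (simp add: sum_ennreal ennreal_leI)
  qed
  then have "(\<integral>\<^sup>+x. ennreal (\<bar>w m\<bar> * \<bar>X m x\<bar>) \<partial>M)
      \<le> (\<integral>\<^sup>+x. (\<Sum>i\<in>J - {m}. ennreal (\<bar>w i\<bar> * \<bar>X i x\<bar>)) \<partial>M)"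
    by (rule nn_integral_mono_AE)
  also have "\<dots> = (\<Sum>i\<in>J - {m}. \<integral>\<^sup>+x. ennreal (\<bar>w i\<bar> * \<bar>X i x\<bar>) \<partial>M)"
    by (rule nn_integral_sum) measurable
  finally show ?thesis
    using assms(2) by (simp add: ennreal_mult nn_integral_cmult)
qed

lemma nn_integral_abs_centered_uniform:
  "\<exists>c>0. (\<integral>\<^sup>+t. \<bar>t - 1/2\<bar> \<partial>uniform_measure lborel {0..1::real}) = ennreal c"
proof -
  let ?I = "\<integral>\<^sup>+t. ennreal \<bar>t - 1/2\<bar> * indicator {0..1} t \<partial>(lborel::real measure)"
  have "?I \<le> (\<integral>\<^sup>+t. ennreal (1/2) * indicator {0..1} t \<partial>(lborel::real measure))"
  proof (intro nn_integral_mono)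
    fix t :: real
    have "ennreal \<bar>t - 1/2\<bar> \<le> ennreal (1/2)" if "0 \<le> t" "t \<le> 1"
      using that unfolding abs_le_iff by (intro ennreal_leI) linarith
    then show "ennreal \<bar>t - 1/2\<bar> * indicator {0..1} t \<le> ennreal (1/2) * indicator {0..1} t"
      by (auto simp: indicator_def simp del: ennreal_half)
  qed
  then have "?I \<noteq> \<top>"
    by (auto simp: nn_integral_cmult_indicator top_unique)
  then obtain c where c: "?I = ennreal c" "0 \<le> c"
    by (cases ?I) auto
  have "ennreal (1/16) = (\<integral>\<^sup>+t. ennreal (1/4) * indicator {0..1/4} t \<partial>(lborel::real measure))"
    by (simp add: nn_integral_cmult_indicator ennreal_mult[symmetric])
  also have "\<dots> \<le> ?I"
    by (intro nn_integral_mono) (auto simp: indicator_def)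
  finally have "0 < c"
    using c by (simp add: ennreal_le_iff)
  moreover have "(\<integral>\<^sup>+t. \<bar>t - 1/2\<bar> \<partial>uniform_measure lborel {0..1::real}) = ennreal c"
    unfolding c(1)[symmetric] by (subst nn_integral_uniform_measure) (auto simp: divide_ennreal_def)
  ultimately show ?thesis
    by blast
qed

lemma measurable_component_w_CM_law:
  assumes "w_CM_law d w M" "i < d"
  shows "(\<lambda>x. x i) \<in> borel_measurable M"
proof -
  have sets: "sets M = sets (PiM {..<d} (\<lambda>_. borel))"
    using assms(1) by (simp add: w_CM_law_def)
  show ?thesis
    using assms(2) by (simp add: measurable_cong_sets[OF sets refl])
qed

lemma nn_integral_component_w_CM_law:
  assumes "w_CM_law d w M" "i < d" and f: "f \<in> borel_measurable borel"
  shows "(\<integral>\<^sup>+x. f (x i) \<partial>M) = (\<integral>\<^sup>+t. f t \<partial>uniform_measure lborel {0..1})"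
proof -
  have "(\<integral>\<^sup>+x. f (x i) \<partial>M) = (\<integral>\<^sup>+t. f t \<partial>distr M borel (\<lambda>x. x i))"
    using measurable_component_w_CM_law[OF assms(1,2)] f
    by (subst nn_integral_distr) (simp_all add: measurable_cong_sets[OF sets_distr refl])
  then show ?thesis
    using assms(1,2) by (simp add: w_CM_law_def)
qed

lemma w_CM_law_polygon_inequality:
  assumes law: "w_CM_law d w M" and "m < d"
  shows "\<bar>w m\<bar> \<le> (\<Sum>i\<in>{..<d} - {m}. \<bar>w i\<bar>)"
proof -
  obtain c where c: "0 < c" "(\<integral>\<^sup>+t. \<bar>t - 1/2\<bar> \<partial>uniform_measure lborel {0..1::real}) = ennreal c"
    using nn_integral_abs_centered_uniform by blast
  have "(\<lambda>t::real. ennreal \<bar>t - 1/2\<bar>) \<in> borel_measurable borel"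
    by measurable
  from nn_integral_component_w_CM_law[OF law _ this]
  have mean_dev: "(\<integral>\<^sup>+x. \<bar>x i - 1/2\<bar> \<partial>M) = ennreal c" if "i < d" for i
    using that c(2) by simp
  have "AE x in M. (\<Sum>i<d. w i * (x i - 1/2)) = 0"
    using law unfolding w_CM_law_def
    by (auto elim: AE_mp simp: right_diff_distrib sum_subtractf sum_divide_distrib)
  then have "ennreal \<bar>w m\<bar> * ennreal c \<le> (\<Sum>i\<in>{..<d} - {m}. ennreal \<bar>w i\<bar> * ennreal c)"
    using nn_integral_abs_le_of_AE_sum_eq_0[of "{..<d}" m "\<lambda>i x. x i - 1/2" M w] \<open>m < d\<close>
    by (simp add: mean_dev measurable_component_w_CM_law[OF law] borel_measurable_diff)
  also have "\<dots> = (\<Sum>i\<in>{..<d} - {m}. ennreal \<bar>w i\<bar>) * ennreal c"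
    by (simp only: sum_distrib_right)
  finally have "ennreal \<bar>w m\<bar> \<le> ennreal (\<Sum>i\<in>{..<d} - {m}. \<bar>w i\<bar>)"
    using c(1) by (simp add: mult.commute[of _ "ennreal c"] ennreal_mult_le_mult_iff)
  then show ?thesis
    by (simp add: sum_nonneg)
qed

lemma Max_le_sum_minus_Max_iff:
  fixes w :: "'a \<Rightarrow> real"
  assumes "finite J" "J \<noteq> {}"
  shows "Max (w ` J) \<le> sum w J - Max (w ` J) \<longleftrightarrow> (\<forall>i\<in>J. 2 * w i \<le> sum w J)"
proof
  assume "Max (w ` J) \<le> sum w J - Max (w ` J)"
  moreover have "w i \<le> Max (w ` J)" if "i \<in> J" for i
    using that assms by simp
  ultimately show "\<forall>i\<in>J. 2 * w i \<le> sum w J"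
    by force
next
  assume "\<forall>i\<in>J. 2 * w i \<le> sum w J"
  moreover have "Max (w ` J) \<in> w ` J"
    using assms by simp
  ultimately show "Max (w ` J) \<le> sum w J - Max (w ` J)"
    by force
qed

theorem mainTheorem8:
  fixes d :: nat and w :: "nat \<Rightarrow> real"
  assumes "d \<ge> 2" and "\<And>i. i < d \<Longrightarrow> w i > 0"
  shows "(\<exists>M. w_CM_law d w M) \<longleftrightarrow>
         Max (w ` {..<d}) \<le> (\<Sum>i<d. w i) - Max (w ` {..<d})"
proof -
  have "0 \<in> {..<d}"
    using assms(1) by simp
  then have "{..<d} \<noteq> {}"
    by blast
  have polygon_iff: "Max (w ` {..<d}) \<le> (\<Sum>i<d. w i) - Max (w ` {..<d})
      \<longleftrightarrow> (\<forall>i<d. 2 * w i \<le> (\<Sum>i<d. w i))"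
    using Max_le_sum_minus_Max_iff[OF finite_lessThan \<open>{..<d} \<noteq> {}\<close>, of w]
    by (simp only: lessThan_iff Ball_def)
  have sum_split: "(\<Sum>j<d. w j) = w i + (\<Sum>j\<in>{..<d} - {i}. w j)" if "i < d" for i
    using that by (simp add: sum.remove)
  show ?thesis
  proof
    assume "\<exists>M. w_CM_law d w M"
    then have "\<bar>w i\<bar> \<le> (\<Sum>j\<in>{..<d} - {i}. \<bar>w j\<bar>)" if "i < d" for i
      using that w_CM_law_polygon_inequality by blast
    then show "Max (w ` {..<d}) \<le> (\<Sum>i<d. w i) - Max (w ` {..<d})"
      unfolding polygon_iff using assms(2) sum_split by (simp add: less_imp_le)
  next
    assume "Max (w ` {..<d}) \<le> (\<Sum>i<d. w i) - Max (w ` {..<d})"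
    then obtain z where "\<forall>i<d. cmod (z i) = 1" "(\<Sum>i<d. w i *\<^sub>R z i) = 0"
      using exists_balanced_unit_vectors[of "{..<d}" w] assms(2) unfolding polygon_iff by auto
    then show "\<exists>M. w_CM_law d w M"
      using w_CM_law_shadow by blast
  qed
qed

end
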